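(* Let $r\ge2$, $\ell\ge1$, let $C=(w_1,\dots,w_{2\ell+1})$ be a semi-valid tuple in $\Omega_n$, and let $i$ and $1\le k\le\ell$ be such that $C$ is $(i,k)$-consecutive. If each of $C_{i,k,-1}$, $C_{i,k,0}$, $C_{i,k,1}$ is semi-valid, then $$|H_n^{(r)}(C)|\ge\min\{|H_n^{(r)}(C_{i,k,-1})|,|H_n^{(r)}(C_{i,k,1})|\}.$$ Moreover, this inequality is strict if $r\ge3$ and $n\ge3r-5$.
   Context: $\Omega_n=\{v_0,\dots,v_{n-1}\}$ with cyclic order $v_0<\dots<v_{n-1}<v_0$, indices of $v$ mod $n$. For distinct vertices $u,w$, $(u,w)$ is the set of vertices strictly between $u$ and $w$ moving clockwise from $u$ to $w$, and $[u,w]=(u,w)\cup\{u,w\}$. A tuple $C=(w_1,\dots,w_{2\ell+1})$ of distinct vertices is semi-valid if $w_1<w_3<\dots<w_{2\ell+1}<w_2<w_4<\dots<w_{2\ell}<w_1$ in clockwise cyclic order; indices of the $w$'s are taken mod $2\ell+1$. $H_n^{(r)}(C)=\{e\in\binom{\Omega_n}{r}: e\cap[w_p,w_{p-1}]\neq\emptyset\ \forall p\in\{1,\dots,2\ell+1\}\}$. $C$ is $(i,k)$-consecutive if there is $j$ with $w_{i+2s}=v_{j+s}$ for all $0\le s<k$. In that case, for an integer $m$, $C_{i,k,m}=(w'_1,\dots,w'_{2\ell+1})$ is the tuple with $w'_{i+2s}=v_{j+s+m}$ for $0\le s<k$ and $w'_p=w_p$ for all other $p$ (so $C_{i,k,0}=C$).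 *)

theory Defs
  imports Main
begin

text \<open>Vertices of \<Omega>_n are 0,...,n-1 (v_j = j), cyclic order 0 < 1 < ... < n-1 < 0.
  Indices of v are taken mod n: v_j for j :: int is the natural number j mod n.\<close>

definition vtx :: "nat \<Rightarrow> int \<Rightarrow> nat" where
  "vtx n j = nat (j mod int n)"

definition cwd :: "nat \<Rightarrow> nat \<Rightarrow> nat \<Rightarrow> nat" where
  "cwd n u w = nat ((int w - int u) mod int n)"

definition cint :: "nat \<Rightarrow> nat \<Rightarrow> nat \<Rightarrow> nat set" where
  "cint n u w = {x. x < n \<and> cwd n u x \<le> cwd n u w}"

definition cyc_ordered :: "nat \<Rightarrow> nat list \<Rightarrow> bool" where
  "cyc_ordered n xs \<longleftrightarrow> distinct xs \<and> set xs \<subseteq> {..<n} \<and>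
     (\<forall>t s. t < s \<and> s < length xs \<longrightarrow> cwd n (xs ! 0) (xs ! t) < cwd n (xs ! 0) (xs ! s))"

text \<open>Tuples C = (w_1,...,w_{2l+1}) are functions C :: nat => nat, of which only the values
  at 1,...,2l+1 matter. Indices are taken mod 2l+1: w_p = C (idx l p) for p :: int.\<close>
definition idx :: "nat \<Rightarrow> int \<Rightarrow> nat" where
  "idx l p = nat ((p - 1) mod int (2*l+1)) + 1"

definition wt :: "nat \<Rightarrow> (nat \<Rightarrow> nat) \<Rightarrow> int \<Rightarrow> nat" where
  "wt l C p = C (idx l p)"

definition semi_valid :: "nat \<Rightarrow> nat \<Rightarrow> (nat \<Rightarrow> nat) \<Rightarrow> bool" where
  "semi_valid n l C \<longleftrightarrow>
     cyc_ordered n (map (\<lambda>t. C (2*t+1)) [0..<l+1] @ map (\<lambda>t. C (2*t+2)) [0..<l])"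

definition H :: "nat \<Rightarrow> nat \<Rightarrow> nat \<Rightarrow> (nat \<Rightarrow> nat) \<Rightarrow> nat set set" where
  "H n r l C = {e. e \<subseteq> {..<n} \<and> card e = r \<and>
     (\<forall>p\<in>{1..int (2*l+1)}. e \<inter> cint n (wt l C p) (wt l C (p - 1)) \<noteq> {})}"

definition consec_with :: "nat \<Rightarrow> nat \<Rightarrow> (nat \<Rightarrow> nat) \<Rightarrow> int \<Rightarrow> nat \<Rightarrow> int \<Rightarrow> bool" where
  "consec_with n l C i k j \<longleftrightarrow> (\<forall>s<k. wt l C (i + 2 * int s) = vtx n (j + int s))"

definition consecutive :: "nat \<Rightarrow> nat \<Rightarrow> (nat \<Rightarrow> nat) \<Rightarrow> int \<Rightarrow> nat \<Rightarrow> bool" where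
  "consecutive n l C i k \<longleftrightarrow> (\<exists>j. consec_with n l C i k j)"

text \<open>C_{i,k,m}, given the witness j: w'_{i+2s} = v_{j+s+m} for 0 <= s < k, other entries unchanged\<close>
definition shiftC :: "nat \<Rightarrow> nat \<Rightarrow> (nat \<Rightarrow> nat) \<Rightarrow> int \<Rightarrow> nat \<Rightarrow> int \<Rightarrow> int \<Rightarrow> (nat \<Rightarrow> nat)" where
  "shiftC n l C i k j m = (\<lambda>q. if \<exists>s<k. idx l (i + 2 * int s) = q
       then vtx n (j + int (SOME s. s < k \<and> idx l (i + 2 * int s) = q) + m)
       else C q)"

end

theory Submission
  imports Defs
begin

text \<open>
  Relabel the vertices by their clockwise distance from \<open>v\<^bsub>j-1\<^esub>\<close>. The consecutive
  vertices \<open>w\<^bsub>i+2s\<^esub> = v\<^bsub>j+s\<^esub>\<close> then sit at \<open>1, \<dots>, k\<close>, and shifting them by \<open>m \<in> {-1, 0, 1}\<close>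
  only changes the \<open>2k\<close> intervals having one of them as an endpoint: \<open>k\<close> left intervals
  \<open>[s+1+m, \<alpha>\<^sub>s]\<close> and \<open>k\<close> right intervals \<open>[\<beta>\<^sub>s, n) \<union> [0, s+1+m]\<close>. Every other interval
  either contains \<open>{0, \<dots>, k+1}\<close> or avoids it.

  Count the admissible \<open>r\<close>-sets meeting all intervals by inclusion-exclusion over
  ``misses a left interval'' and ``misses a right interval''. The sets missing both are
  equinumerous for all three shifts (shift their part inside \<open>{0, \<dots>, k+1}\<close> by one).
  The sets missing a left interval grow with non-decreasing increments: moving the
  largest element inside \<open>{0, \<dots>, k+1}\<close> up by one injects the sets lost at the first step
  into those lost at the second; symmetrically on the right. So the count \<open>h(m)\<close> is
  concave, \<open>h(-1) + h(1) \<le> 2 h(0)\<close>, which gives the inequality. For \<open>r \<ge> 3\<close> and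
  \<open>n \<ge> 3r - 5\<close> there is room for an explicit \<open>r\<close>-set outside the image of one of the two
  injections, which makes it strict.
\<close>

section \<open>Concavity in the linear model\<close>

lemma card_inj_on_less:
  assumes "inj_on f A" "f ` A \<subseteq> B - {w}" "w \<in> B" "finite B"
  shows "card A < card B"
proof -
  have "card A \<le> card (B - {w})"
    using card_inj_on_le[OF assms(1,2)] assms(4) by simp
  also have "\<dots> < card B"
    using card_Diff1_less[OF assms(4,3)] .
  finally show ?thesis .
qed

lemma exists_card_between:
  assumes "B \<subseteq> T" "finite T" "card B \<le> m" "m \<le> card T"
  obtains e where "B \<subseteq> e" "e \<subseteq> T" "card e = m"
proof -
  have finB: "finite B" using assms(1,2) by (rule finite_subset)
  have "m - card B \<le> card (T - B)"
    using assms by (simp add: card_Diff_subset finB)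
  then obtain P where P: "P \<subseteq> T - B" "card P = m - card B"
    by (rule obtain_subset_with_card_n)
  have finP: "finite P" using P(1) assms(2) by (meson finite_Diff finite_subset)
  have "B \<inter> P = {}" using P(1) by blast
  then have "card (B \<union> P) = m" using card_Un_disjoint[OF finB finP] P(2) assms(3) by simp
  moreover have "B \<union> P \<subseteq> T" using P(1) assms(1) by blast
  ultimately show ?thesis using that[of "B \<union> P"] by blast
qed

text \<open>The parameter \<open>m = 0, 1, 2\<close> of the interval families below is the shift plus one;
  \<open>fixed\<close> holds the intervals that do not move.\<close>

locale block_shift =
  fixes n k r :: nat and fixed :: "nat set set" and \<alpha> \<beta> :: "nat \<Rightarrow> nat"
  assumes block_nonempty: "1 \<le> k"
    and alpha_range: "s < k \<Longrightarrow> k+1 < \<alpha> s \<and> \<alpha> s < n"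
    and beta_range: "s < k \<Longrightarrow> k+1 < \<beta> s \<and> \<beta> s < n"
    and fixed_block: "f \<in> fixed \<Longrightarrow> {..k+1} \<subseteq> f \<or> {..k+1} \<inter> f = {}"
begin

definition adm :: "nat set set" where
  "adm = {e. e \<subseteq> {..<n} \<and> card e = r \<and> (\<forall>f\<in>fixed. e \<inter> f \<noteq> {})}"

definition hits_left :: "nat \<Rightarrow> nat set set" where
  "hits_left m = {e. \<forall>s<k. e \<inter> {s+m..\<alpha> s} \<noteq> {}}"

definition hits_right :: "nat \<Rightarrow> nat set set" where
  "hits_right m = {e. \<forall>s<k. e \<inter> ({\<beta> s..<n} \<union> {..s+m}) \<noteq> {}}"

definition transversals :: "nat \<Rightarrow> nat set set" where
  "transversals m = adm \<inter> hits_left m \<inter> hits_right m"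

definition misses_both :: "nat \<Rightarrow> nat set set" where
  "misses_both m = adm - hits_left m - hits_right m"

lemma block_lt_n: "k+1 < n"
  using alpha_range[of 0] block_nonempty by auto

lemma finite_adm: "finite adm"
  by (rule finite_subset[of _ "Pow {..<n}"]) (auto simp: adm_def)

lemma finite_adm_mem: "e \<in> adm \<Longrightarrow> finite e"
  unfolding adm_def using finite_subset[of e "{..<n}"] by auto

lemma card_transversals:
  "card (transversals m) + card (adm - hits_left m) + card (adm - hits_right m)
     = card adm + card (misses_both m)"
proof -
  let ?X = "adm - hits_left m" and ?Y = "adm - hits_right m"
  have fin: "finite ?X" "finite ?Y" "finite (transversals m)"
    using finite_adm by (auto simp: transversals_def)
  have "card adm = card (transversals m \<union> (?X \<union> ?Y))"
    by (rule arg_cong[where f = card]) (auto simp: transversals_def)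
  also have "\<dots> = card (transversals m) + card (?X \<union> ?Y)"
    using fin by (intro card_Un_disjoint) (auto simp: transversals_def)
  finally have "card adm = card (transversals m) + card (?X \<union> ?Y)" .
  moreover have "card (?X \<union> ?Y) + card (?X \<inter> ?Y) = card ?X + card ?Y"
    using card_Un_Int[OF fin(1,2)] by simp
  moreover have "card (?X \<inter> ?Y) = card (misses_both m)"
    by (rule arg_cong[where f = card]) (auto simp: misses_both_def)
  ultimately show ?thesis by linarith
qed

lemma adm_if_agrees_above_block:
  assumes "e \<in> adm" "e' \<subseteq> {..<n}" "card e' = r"
    and above: "\<And>x. x \<in> e \<Longrightarrow> k+1 < x \<Longrightarrow> x \<in> e'"
    and block: "e \<inter> {..k+1} \<noteq> {} \<Longrightarrow> e' \<inter> {..k+1} \<noteq> {}"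
  shows "e' \<in> adm"
  unfolding adm_def
proof (intro CollectI conjI ballI)
  fix f assume f: "f \<in> fixed"
  from assms(1) f obtain x where x: "x \<in> e" "x \<in> f" by (auto simp: adm_def)
  show "e' \<inter> f \<noteq> {}"
  proof (cases "x \<le> k+1")
    case True
    then have "{..k+1} \<subseteq> f" using x fixed_block[OF f] by auto
    then show ?thesis using block x True by blast
  next
    case False
    then show ?thesis using x above[of x] by auto
  qed
qed (use assms in auto)

definition block_succ :: "nat \<Rightarrow> nat" where
  "block_succ x = (if x \<le> k+1 then Suc x else x)"

definition block_pred :: "nat \<Rightarrow> nat" where
  "block_pred x = (if x \<le> k+1 then x - 1 else x)"

lemma misses_both_not_top: "e \<in> misses_both m \<Longrightarrow> m \<le> 1 \<Longrightarrow> k+1 \<notin> e"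
  using alpha_range by (fastforce simp: misses_both_def hits_left_def)

lemma misses_both_not_zero: "e \<in> misses_both m \<Longrightarrow> 0 \<notin> e"
  by (auto simp: misses_both_def hits_right_def)

lemma block_succ_image_misses_both:
  assumes "e \<in> misses_both m" "m \<le> 1"
  shows "block_succ ` e \<in> misses_both (Suc m)"
proof -
  have top: "k+1 \<notin> e" using misses_both_not_top assms by blast
  have e: "e \<in> adm" using assms by (auto simp: misses_both_def)
  have inj: "inj_on block_succ e"
    using top by (fastforce simp: inj_on_def block_succ_def le_Suc_eq split: if_splits)
  have "block_succ ` e \<in> adm"
  proof (rule adm_if_agrees_above_block[OF e])
    show "block_succ ` e \<subseteq> {..<n}"
      using e top block_lt_n by (force simp: adm_def block_succ_def le_Suc_eq)
    show "card (block_succ ` e) = r"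
      using card_image[OF inj] e by (simp add: adm_def)
    show "block_succ ` e \<inter> {..k+1} \<noteq> {}" if met: "e \<inter> {..k+1} \<noteq> {}"
    proof -
      obtain x where "x \<in> e" "x \<le> k" using met top by (fastforce simp: le_Suc_eq)
      then have "block_succ x \<in> block_succ ` e \<inter> {..k+1}" by (simp add: block_succ_def)
      then show ?thesis by blast
    qed
  qed (force simp: block_succ_def)
  moreover have "block_succ ` e \<notin> hits_left (Suc m)"
  proof -
    obtain s where "s < k" "e \<inter> {s+m..\<alpha> s} = {}"
      using assms(1) by (auto simp: misses_both_def hits_left_def)
    then show ?thesis
      using alpha_range by (fastforce simp: hits_left_def block_succ_def split: if_splits)
  qed
  moreover have "block_succ ` e \<notin> hits_right (Suc m)"
  proof -
    obtain t where t: "t < k" "e \<inter> ({\<beta> t..<n} \<union> {..t+m}) = {}"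
      using assms(1) by (auto simp: misses_both_def hits_right_def)
    have "y \<notin> {\<beta> t..<n} \<union> {..t + Suc m}" if "x \<in> e" "y = block_succ x" for x y
    proof -
      have "x \<noteq> k+1" using top that by auto
      then show ?thesis
        using that t beta_range[OF t(1)] assms(2) by (auto simp: block_succ_def split: if_splits)
    qed
    then have "block_succ ` e \<inter> ({\<beta> t..<n} \<union> {..t + Suc m}) = {}" by blast
    then show ?thesis using t(1) by (auto simp: hits_right_def)
  qed
  ultimately show ?thesis by (simp add: misses_both_def)
qed

lemma block_pred_image_misses_both:
  assumes "e \<in> misses_both (Suc m)" "m \<le> 1"
  shows "block_pred ` e \<in> misses_both m"
proof -
  have zero: "0 \<notin> e" using misses_both_not_zero assms by blast
  have e: "e \<in> adm" using assms by (auto simp: misses_both_def)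
  have inj: "inj_on block_pred e"
  proof (rule inj_onI)
    fix x y assume "x \<in> e" "y \<in> e" "block_pred x = block_pred y"
    then show "x = y"
      using zero by (cases "x = 0"; cases "y = 0") (auto simp: block_pred_def split: if_splits)
  qed
  have "block_pred ` e \<in> adm"
  proof (rule adm_if_agrees_above_block[OF e])
    show "block_pred ` e \<subseteq> {..<n}"
      using e block_lt_n by (auto simp: adm_def block_pred_def)
    show "card (block_pred ` e) = r"
      using card_image[OF inj] e by (simp add: adm_def)
    show "block_pred ` e \<inter> {..k+1} \<noteq> {}" if met: "e \<inter> {..k+1} \<noteq> {}"
    proof -
      obtain x where "x \<in> e" "x \<le> k+1" using met by blast
      then have "block_pred x \<in> block_pred ` e \<inter> {..k+1}" by (simp add: block_pred_def)
      then show ?thesis by blast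
    qed
  qed (force simp: block_pred_def)
  moreover have "block_pred ` e \<notin> hits_left m"
  proof -
    obtain s where s: "s < k" "e \<inter> {s + Suc m..\<alpha> s} = {}"
      using assms(1) by (auto simp: misses_both_def hits_left_def)
    have "y \<notin> {s+m..\<alpha> s}" if "x \<in> e" "y = block_pred x" for x y
    proof -
      have "x \<noteq> 0" using zero that(1) by (cases "x = 0") simp_all
      then show ?thesis
        using that s alpha_range[OF s(1)] assms(2) by (auto simp: block_pred_def split: if_splits)
    qed
    then have "block_pred ` e \<inter> {s+m..\<alpha> s} = {}" by blast
    then show ?thesis using s(1) by (auto simp: hits_left_def)
  qed
  moreover have "block_pred ` e \<notin> hits_right m"
  proof -
    obtain t where t: "t < k" "e \<inter> ({\<beta> t..<n} \<union> {..t + Suc m}) = {}"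
      using assms(1) by (auto simp: misses_both_def hits_right_def)
    have "y \<notin> {\<beta> t..<n} \<union> {..t+m}" if "x \<in> e" "y = block_pred x" for x y
    proof -
      have "x \<noteq> 0" using zero that(1) by (cases "x = 0") simp_all
      then show ?thesis
        using that t beta_range[OF t(1)] assms(2) by (auto simp: block_pred_def split: if_splits)
    qed
    then have "block_pred ` e \<inter> ({\<beta> t..<n} \<union> {..t+m}) = {}" by blast
    then show ?thesis using t(1) by (auto simp: hits_right_def)
  qed
  ultimately show ?thesis by (simp add: misses_both_def)
qed

lemma card_misses_both_Suc:
  assumes "m \<le> 1"
  shows "card (misses_both (Suc m)) = card (misses_both m)"
proof -
  have fin: "finite (misses_both m')" for m'
    using finite_adm by (auto simp: misses_both_def)
  have pred_succ: "block_pred ` block_succ ` e = e" if "e \<in> misses_both m" for e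
  proof -
    have "k+1 \<notin> e" using misses_both_not_top that assms by blast
    then have "\<forall>x\<in>e. block_pred (block_succ x) = x"
      by (auto simp: block_succ_def block_pred_def le_Suc_eq)
    then show ?thesis by (simp add: image_image)
  qed
  have succ_pred: "block_succ ` block_pred ` e = e" if e: "e \<in> misses_both (Suc m)" for e
  proof -
    have "block_succ (block_pred x) = x" if "x \<in> e" for x
    proof -
      have "x \<noteq> 0" using misses_both_not_zero[OF e] that by (cases "x = 0") simp_all
      then show ?thesis by (auto simp: block_succ_def block_pred_def)
    qed
    then show ?thesis by (simp add: image_image)
  qed
  have "inj_on (image block_succ) (misses_both m)"
    by (rule inj_on_inverseI[where g = "image block_pred"]) (rule pred_succ)
  then have "card (misses_both m) \<le> card (misses_both (Suc m))"
    using block_succ_image_misses_both[OF _ assms] fin by (intro card_inj_on_le) auto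
  moreover have "inj_on (image block_pred) (misses_both (Suc m))"
    by (rule inj_on_inverseI[where g = "image block_succ"]) (rule succ_pred)
  then have "card (misses_both (Suc m)) \<le> card (misses_both m)"
    using block_pred_image_misses_both[OF _ assms] fin by (intro card_inj_on_le) auto
  ultimately show ?thesis by simp
qed

definition lost_left :: "nat \<Rightarrow> nat set set" where
  "lost_left m = adm \<inter> hits_left m - hits_left (Suc m)"

definition gained_right :: "nat \<Rightarrow> nat set set" where
  "gained_right m = adm \<inter> hits_right (Suc m) - hits_right m"

lemma hits_left_Suc_subset: "hits_left (Suc m) \<subseteq> hits_left m"
  unfolding hits_left_def by (fastforce simp: disjoint_iff)

lemma hits_right_subset_Suc: "hits_right m \<subseteq> hits_right (Suc m)"
  unfolding hits_right_def by (fastforce simp: disjoint_iff)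

lemma card_adm_diff_hits_left_Suc:
  "card (adm - hits_left (Suc m)) = card (adm - hits_left m) + card (lost_left m)"
proof -
  have "adm - hits_left (Suc m) = (adm - hits_left m) \<union> lost_left m"
    using hits_left_Suc_subset[of m] by (auto simp: lost_left_def)
  moreover have "(adm - hits_left m) \<inter> lost_left m = {}" by (auto simp: lost_left_def)
  ultimately show ?thesis
    using finite_adm by (simp add: card_Un_disjoint lost_left_def)
qed

lemma card_adm_diff_hits_right:
  "card (adm - hits_right m) = card (adm - hits_right (Suc m)) + card (gained_right m)"
proof -
  have "adm - hits_right m = (adm - hits_right (Suc m)) \<union> gained_right m"
    using hits_right_subset_Suc[of m] by (auto simp: gained_right_def)
  moreover have "(adm - hits_right (Suc m)) \<inter> gained_right m = {}" by (auto simp: gained_right_def)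
  ultimately show ?thesis
    using finite_adm by (simp add: card_Un_disjoint gained_right_def)
qed

definition block_max :: "nat set \<Rightarrow> nat" where
  "block_max e = Max (e \<inter> {..k+1})"

definition block_min :: "nat set \<Rightarrow> nat" where
  "block_min e = Min (e \<inter> {..k+1})"

definition raise_max :: "nat set \<Rightarrow> nat set" where
  "raise_max e = insert (Suc (block_max e)) (e - {block_max e})"

definition lower_min :: "nat set \<Rightarrow> nat set" where
  "lower_min e = insert (block_min e - 1) (e - {block_min e})"

lemma lost_left_0_witness:
  assumes "e \<in> lost_left 0"
  obtains s where "s < k" "s \<in> e" "e \<inter> {s+1..\<alpha> s} = {}" "block_max e = s"
proof -
  from assms obtain s where s: "s < k" "e \<inter> {s+1..\<alpha> s} = {}"
    by (auto simp: lost_left_def hits_left_def)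
  from assms s(1) obtain x where x: "x \<in> e" "s \<le> x" "x \<le> \<alpha> s"
    by (force simp: lost_left_def hits_left_def)
  have "x = s" using x s(2) by (cases "x = s") auto
  then have se: "s \<in> e" using x by simp
  have "block_max e = s"
    unfolding block_max_def
  proof (rule Max_eqI)
    show "finite (e \<inter> {..k+1})" using assms finite_adm_mem by (simp add: lost_left_def)
    show "s \<in> e \<inter> {..k+1}" using se s(1) by simp
    show "y \<le> s" if "y \<in> e \<inter> {..k+1}" for y
      using that s alpha_range[OF s(1)] by (cases "y \<le> s") auto
  qed
  then show ?thesis using that s se by blast
qed

lemma raise_max_lost_left_0:
  assumes "e \<in> lost_left 0"
  shows "raise_max e \<in> lost_left 1"
    and "block_max (raise_max e) = Suc (block_max e)"
    and "block_max e \<notin> raise_max e"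
    and "e = insert (block_max e) (raise_max e - {Suc (block_max e)})"
proof -
  obtain s where s: "s < k" "s \<in> e" "e \<inter> {s+1..\<alpha> s} = {}" "block_max e = s"
    using lost_left_0_witness[OF assms] .
  have e: "e \<in> adm" "e \<in> hits_left 0" using assms by (auto simp: lost_left_def)
  have fin: "finite e" using finite_adm_mem[OF e(1)] .
  have succ: "Suc s \<notin> e" using s(1,3) alpha_range[OF s(1)] by auto
  have eq: "raise_max e = insert (Suc s) (e - {s})"
    unfolding raise_max_def s(4) ..
  show "block_max e \<notin> raise_max e" unfolding eq s(4) by simp
  show "e = insert (block_max e) (raise_max e - {Suc (block_max e)})"
    unfolding eq s(4) using s(2) succ by auto
  have "raise_max e \<in> adm"
  proof (rule adm_if_agrees_above_block[OF e(1)])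
    show "raise_max e \<subseteq> {..<n}" unfolding eq using e(1) block_lt_n s(1) by (auto simp: adm_def)
    have "card e > 0" using s(2) fin by (auto simp: card_gt_0_iff)
    then show "card (raise_max e) = r" unfolding eq using e(1) s(2) succ fin by (simp add: adm_def)
  qed (use s(1) in \<open>auto simp: eq\<close>)
  moreover have "raise_max e \<in> hits_left 1"
    unfolding hits_left_def
  proof (intro CollectI allI impI)
    fix s' assume s': "s' < k"
    show "raise_max e \<inter> {s' + 1..\<alpha> s'} \<noteq> {}"
    proof (cases "s' \<le> s")
      case True
      then have "Suc s \<in> raise_max e \<inter> {s' + 1..\<alpha> s'}"
        unfolding eq using alpha_range[OF s'] s(1) by auto
      then show ?thesis by blast
    next
      case False
      obtain x where x: "x \<in> e" "s' \<le> x" "x \<le> \<alpha> s'"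
        using e(2) s' by (force simp: hits_left_def)
      have "x \<noteq> s'" using x(1) s(3) False alpha_range[OF s(1)] s' by auto
      then have "x \<in> raise_max e \<inter> {s' + 1..\<alpha> s'}" unfolding eq using x False by auto
      then show ?thesis by blast
    qed
  qed
  moreover have "raise_max e \<notin> hits_left 2"
  proof -
    have "raise_max e \<inter> {s+2..\<alpha> s} = {}" unfolding eq using s(3) by auto
    then show ?thesis using s(1) by (auto simp: hits_left_def)
  qed
  ultimately show "raise_max e \<in> lost_left 1" by (simp add: lost_left_def numeral_2_eq_2)
  show "block_max (raise_max e) = Suc (block_max e)"
    unfolding block_max_def[of "raise_max e"] s(4)
  proof (rule Max_eqI)
    show "finite (raise_max e \<inter> {..k+1})" unfolding eq using fin by simp
    show "Suc s \<in> raise_max e \<inter> {..k+1}" unfolding eq using s(1) by simp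
    show "y \<le> Suc s" if "y \<in> raise_max e \<inter> {..k+1}" for y
    proof (cases "y = Suc s")
      case False
      then have "y \<in> e \<inter> {..k+1}" using that unfolding eq by auto
      then have "y \<le> block_max e" unfolding block_max_def using fin by (intro Max_ge) simp_all
      then show ?thesis using s(4) by simp
    qed simp
  qed
qed

lemma inj_on_raise_max: "inj_on raise_max (lost_left 0)"
proof (rule inj_onI)
  fix e e' assume e: "e \<in> lost_left 0" "e' \<in> lost_left 0" "raise_max e = raise_max e'"
  then have "block_max e = block_max e'"
    using raise_max_lost_left_0(2)[OF e(1)] raise_max_lost_left_0(2)[OF e(2)] by simp
  then show "e = e'"
    using raise_max_lost_left_0(4)[OF e(1)] raise_max_lost_left_0(4)[OF e(2)] e(3) by simp
qed

lemma card_lost_left_mono: "card (lost_left 0) \<le> card (lost_left 1)"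
  using finite_adm raise_max_lost_left_0(1)
  by (intro card_inj_on_le[OF inj_on_raise_max]) (auto simp: lost_left_def)

lemma card_lost_left_less:
  assumes "w \<in> lost_left 1" "block_max w = Suc u" "u \<in> w"
  shows "card (lost_left 0) < card (lost_left 1)"
proof (rule card_inj_on_less[OF inj_on_raise_max _ assms(1)])
  show "finite (lost_left 1)" using finite_adm by (simp add: lost_left_def)
  show "raise_max ` lost_left 0 \<subseteq> lost_left 1 - {w}"
    using raise_max_lost_left_0 assms(2,3) by fastforce
qed


lemma gained_right_1_witness:
  assumes "e \<in> gained_right 1"
  obtains t where "t < k" "Suc (Suc t) \<in> e" "e \<inter> ({\<beta> t..<n} \<union> {..t+1}) = {}"
    "block_min e = Suc (Suc t)"
proof -
  from assms obtain t where t: "t < k" "e \<inter> ({\<beta> t..<n} \<union> {..t+1}) = {}"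
    by (auto simp: gained_right_def hits_right_def)
  from assms t(1) obtain x where x: "x \<in> e" "x \<in> {\<beta> t..<n} \<union> {..t+2}"
    by (force simp: gained_right_def hits_right_def numeral_2_eq_2)
  have "x = Suc (Suc t)" using x t(2) by auto
  then have tt: "Suc (Suc t) \<in> e" using x by simp
  have "block_min e = Suc (Suc t)"
    unfolding block_min_def
  proof (rule Min_eqI)
    show "finite (e \<inter> {..k+1})" using assms finite_adm_mem by (simp add: gained_right_def)
    show "Suc (Suc t) \<in> e \<inter> {..k+1}" using tt t(1) by simp
    show "Suc (Suc t) \<le> y" if "y \<in> e \<inter> {..k+1}" for y
      using that t by (cases "Suc (Suc t) \<le> y") auto
  qed
  then show ?thesis using that t tt by blast
qed

lemma lower_min_gained_right_1:
  assumes "e \<in> gained_right 1"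
  shows "lower_min e \<in> gained_right 0"
    and "block_min (lower_min e) = block_min e - 1"
    and "block_min e \<notin> lower_min e"
    and "e = insert (block_min e) (lower_min e - {block_min e - 1})"
proof -
  obtain t where t: "t < k" "Suc (Suc t) \<in> e" "e \<inter> ({\<beta> t..<n} \<union> {..t+1}) = {}"
    "block_min e = Suc (Suc t)"
    using gained_right_1_witness[OF assms] .
  have e: "e \<in> adm" "e \<in> hits_right 2"
    using assms by (auto simp: gained_right_def numeral_2_eq_2)
  have fin: "finite e" using finite_adm_mem[OF e(1)] .
  have pred: "Suc t \<notin> e" using t(3) by auto
  have eq: "lower_min e = insert (Suc t) (e - {Suc (Suc t)})"
    unfolding lower_min_def t(4) by simp
  show "block_min e \<notin> lower_min e" unfolding eq t(4) by simp
  show "e = insert (block_min e) (lower_min e - {block_min e - 1})"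
    unfolding eq t(4) using t(2) pred by auto
  have "lower_min e \<in> adm"
  proof (rule adm_if_agrees_above_block[OF e(1)])
    show "lower_min e \<subseteq> {..<n}" unfolding eq using e(1) block_lt_n t(1) by (auto simp: adm_def)
    have "card e > 0" using t(2) fin by (auto simp: card_gt_0_iff)
    then show "card (lower_min e) = r" unfolding eq using e(1) t(2) pred fin by (simp add: adm_def)
  qed (use t(1) in \<open>auto simp: eq\<close>)
  moreover have "lower_min e \<in> hits_right 1"
    unfolding hits_right_def
  proof (intro CollectI allI impI)
    fix t' assume t': "t' < k"
    show "lower_min e \<inter> ({\<beta> t'..<n} \<union> {..t' + 1}) \<noteq> {}"
    proof (cases "t \<le> t'")
      case True
      then have "Suc t \<in> lower_min e \<inter> ({\<beta> t'..<n} \<union> {..t' + 1})" unfolding eq by auto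
      then show ?thesis by blast
    next
      case False
      obtain x where x: "x \<in> e" "x \<in> {\<beta> t'..<n} \<union> {..t'+2}"
        using e(2) t' by (force simp: hits_right_def)
      have "x \<notin> {..t+1}" using x(1) t(3) by blast
      then have "x \<noteq> Suc (Suc t) \<and> x \<in> {\<beta> t'..<n}"
        using x(2) False beta_range[OF t'] t(1) by auto
      then have "x \<in> lower_min e \<inter> ({\<beta> t'..<n} \<union> {..t' + 1})" unfolding eq using x by auto
      then show ?thesis by blast
    qed
  qed
  moreover have "lower_min e \<notin> hits_right 0"
  proof -
    have "Suc t \<notin> {\<beta> t..<n}" using beta_range[OF t(1)] t(1) by auto
    then have "lower_min e \<inter> ({\<beta> t..<n} \<union> {..t}) = {}" unfolding eq using t(3) by auto
    then show ?thesis using t(1) by (auto simp: hits_right_def)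
  qed
  ultimately show "lower_min e \<in> gained_right 0" by (simp add: gained_right_def)
  show "block_min (lower_min e) = block_min e - 1"
    unfolding block_min_def[of "lower_min e"] t(4)
  proof (rule Min_eqI)
    show "finite (lower_min e \<inter> {..k+1})" unfolding eq using fin by simp
    show "Suc (Suc t) - 1 \<in> lower_min e \<inter> {..k+1}" unfolding eq using t(1) by simp
    show "Suc (Suc t) - 1 \<le> y" if "y \<in> lower_min e \<inter> {..k+1}" for y
    proof (cases "y = Suc t")
      case False
      then have "y \<in> e \<inter> {..k+1}" using that unfolding eq by auto
      then have "block_min e \<le> y" unfolding block_min_def using fin by (intro Min_le) simp_all
      then show ?thesis using t(4) by simp
    qed simp
  qed
qed

lemma inj_on_lower_min: "inj_on lower_min (gained_right 1)"
proof (rule inj_onI)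
  fix e e' assume e: "e \<in> gained_right 1" "e' \<in> gained_right 1" "lower_min e = lower_min e'"
  have "block_min e = Suc (block_min (lower_min e))" "block_min e' = Suc (block_min (lower_min e'))"
    using lower_min_gained_right_1(2) gained_right_1_witness by (metis diff_Suc_1 e(1,2))+
  then have "block_min e = block_min e'" using e(3) by simp
  then show "e = e'"
    using lower_min_gained_right_1(4)[OF e(1)] lower_min_gained_right_1(4)[OF e(2)] e(3) by simp
qed

lemma card_gained_right_antimono: "card (gained_right 1) \<le> card (gained_right 0)"
  using finite_adm lower_min_gained_right_1(1)
  by (intro card_inj_on_le[OF inj_on_lower_min]) (auto simp: gained_right_def)

lemma card_gained_right_less:
  assumes "w \<in> gained_right 0" "block_min w = u" "Suc u \<in> w"
  shows "card (gained_right 1) < card (gained_right 0)"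
proof (rule card_inj_on_less[OF inj_on_lower_min _ assms(1)])
  show "finite (gained_right 0)" using finite_adm by (simp add: gained_right_def)
  have "lower_min e \<noteq> w" if "e \<in> gained_right 1" for e
  proof
    assume "lower_min e = w"
    then have "block_min e = Suc u"
      using lower_min_gained_right_1(2)[OF that] gained_right_1_witness[OF that] assms(2) by force
    then show False using lower_min_gained_right_1(3)[OF that] \<open>lower_min e = w\<close> assms(3) by simp
  qed
  then show "lower_min ` gained_right 1 \<subseteq> gained_right 0 - {w}"
    using lower_min_gained_right_1(1) by blast
qed


lemma transversals_second_difference:
  "card (transversals 0) + card (transversals 2) + card (lost_left 1) + card (gained_right 0)
     = 2 * card (transversals 1) + card (lost_left 0) + card (gained_right 1)"
proof -
  have "card (misses_both 0) = card (misses_both 1)" "card (misses_both 1) = card (misses_both 2)"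
    using card_misses_both_Suc[of 0] card_misses_both_Suc[of 1] by (simp_all add: numeral_2_eq_2)
  moreover have "card (adm - hits_left 1) = card (adm - hits_left 0) + card (lost_left 0)"
    "card (adm - hits_left 2) = card (adm - hits_left 1) + card (lost_left 1)"
    using card_adm_diff_hits_left_Suc[of 0] card_adm_diff_hits_left_Suc[of 1]
    by (simp_all add: numeral_2_eq_2)
  moreover have "card (adm - hits_right 0) = card (adm - hits_right 1) + card (gained_right 0)"
    "card (adm - hits_right 1) = card (adm - hits_right 2) + card (gained_right 1)"
    using card_adm_diff_hits_right[of 0] card_adm_diff_hits_right[of 1]
    by (simp_all add: numeral_2_eq_2)
  ultimately show ?thesis
    using card_transversals[of 0] card_transversals[of 1] card_transversals[of 2] by linarith
qed

lemma card_transversals_concave: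
  "card (transversals 0) + card (transversals 2) \<le> 2 * card (transversals 1)"
  using transversals_second_difference card_lost_left_mono card_gained_right_antimono by linarith

lemma card_lost_left_less_if_room:
  assumes fixed: "\<And>f. f \<in> fixed \<Longrightarrow> {..k+1} \<subseteq> f \<or> \<gamma> \<in> f"
    and \<gamma>: "\<alpha> 0 < \<gamma>" "\<gamma> < n" "\<And>s. 1 \<le> s \<Longrightarrow> s < k \<Longrightarrow> \<gamma> \<le> \<alpha> s"
    and r: "3 \<le> r" "r \<le> n - \<alpha> 0 + 1"
  shows "card (lost_left 0) < card (lost_left 1)"
proof -
  let ?T = "{0, 1} \<union> {\<alpha> 0<..<n}"
  have a0: "k+1 < \<alpha> 0" "\<alpha> 0 < n" using alpha_range[of 0] block_nonempty by auto
  have "card ?T = n - \<alpha> 0 + 1" using a0 by (subst card_Un_disjoint) auto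
  then have T: "r \<le> card ?T" using r by simp
  have B: "card {0, 1, \<gamma>} \<le> r" using a0 \<gamma>(1) r by auto
  have "{0, 1, \<gamma>} \<subseteq> ?T" using \<gamma>(1,2) by auto
  then obtain w where w: "{0, 1, \<gamma>} \<subseteq> w" "w \<subseteq> ?T" "card w = r"
    using exists_card_between[OF _ _ B T] by blast
  have low: "w \<inter> {..k+1} = {0, 1}" using w(1,2) a0 by auto
  have "w \<in> adm"
  proof -
    have "w \<inter> f \<noteq> {}" if "f \<in> fixed" for f
      using fixed[OF that] w(1) by auto
    moreover have "w \<subseteq> {..<n}" using w(2) a0 by auto
    ultimately show ?thesis using w(3) by (simp add: adm_def)
  qed
  moreover have "w \<in> hits_left 1"
  proof -
    have "w \<inter> {s + 1..\<alpha> s} \<noteq> {}" if "s < k" for s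
    proof (cases "s = 0")
      case True
      then show ?thesis using w(1) a0 by auto
    next
      case False
      then have "\<gamma> \<in> w \<inter> {s + 1..\<alpha> s}" using w(1) \<gamma>(1) \<gamma>(3)[of s] that False a0 by auto
      then show ?thesis by blast
    qed
    then show ?thesis by (simp add: hits_left_def)
  qed
  moreover have "w \<notin> hits_left 2"
  proof -
    have "w \<inter> {0 + 2..\<alpha> 0} = {}" using w(2) by auto
    then show ?thesis using block_nonempty unfolding hits_left_def by force
  qed
  moreover have "block_max w = Suc 0" unfolding block_max_def low by simp
  ultimately show ?thesis
    using card_lost_left_less[of w 0] w(1) by (simp add: lost_left_def numeral_2_eq_2)
qed


lemma card_gained_right_less_if_room:
  assumes fixed: "\<And>f. f \<in> fixed \<Longrightarrow> {..k+1} \<subseteq> f \<or> \<delta> \<in> f"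
    and \<delta>: "k+1 < \<delta>" "\<delta> < \<beta> (k-1)" "\<And>t. t + 1 < k \<Longrightarrow> \<beta> t \<le> \<delta>"
    and r: "3 \<le> r" "r \<le> \<beta> (k-1) - k"
  shows "card (gained_right 1) < card (gained_right 0)"
proof -
  let ?T = "{k, k+1} \<union> {k+1<..<\<beta> (k-1)}"
  have b: "k+1 < \<beta> (k-1)" "\<beta> (k-1) < n" using beta_range[of "k-1"] block_nonempty by auto
  have "card ?T = \<beta> (k-1) - k" using b by (subst card_Un_disjoint) auto
  then have T: "r \<le> card ?T" using r by simp
  have B: "card {k, k+1, \<delta>} \<le> r" using \<delta>(1) r by auto
  have "{k, k+1, \<delta>} \<subseteq> ?T" using \<delta>(1,2) by auto
  then obtain w where w: "{k, k+1, \<delta>} \<subseteq> w" "w \<subseteq> ?T" "card w = r"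
    using exists_card_between[OF _ _ B T] by blast
  have low: "w \<inter> {..k+1} = {k, k+1}" using w(1,2) by auto
  have "w \<in> adm"
  proof -
    have "w \<inter> f \<noteq> {}" if "f \<in> fixed" for f
      using fixed[OF that] w(1) by auto
    moreover have "w \<subseteq> {..<n}" using w(2) b by auto
    ultimately show ?thesis using w(3) by (simp add: adm_def)
  qed
  moreover have "w \<in> hits_right 1"
  proof -
    have "w \<inter> ({\<beta> t..<n} \<union> {..t + 1}) \<noteq> {}" if "t < k" for t
    proof (cases "t + 1 = k")
      case True
      then show ?thesis using w(1) by auto
    next
      case False
      then have "\<delta> \<in> w \<inter> ({\<beta> t..<n} \<union> {..t + 1})"
        using w(1) \<delta>(2) \<delta>(3)[of t] that b by auto
      then show ?thesis by blast
    qed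
    then show ?thesis by (simp add: hits_right_def)
  qed
  moreover have "w \<notin> hits_right 0"
  proof -
    have "x \<notin> {\<beta> (k-1)..<n} \<union> {..k-1+0}" if "x \<in> w" for x
      using subsetD[OF w(2) that] block_nonempty b by auto
    then have "w \<inter> ({\<beta> (k-1)..<n} \<union> {..k-1+0}) = {}" by blast
    moreover have "k - 1 < k" using block_nonempty by simp
    ultimately show ?thesis unfolding hits_right_def by blast
  qed
  moreover have "block_min w = k" unfolding block_min_def low by simp
  ultimately show ?thesis
    using card_gained_right_less[of w k] w(1) by (simp add: gained_right_def)
qed

lemma card_transversals_strictly_concave:
  assumes fixed: "\<And>f. f \<in> fixed \<Longrightarrow> {..k+1} \<subseteq> f \<or> (\<gamma> \<in> f \<and> \<delta> \<in> f)"
    and \<gamma>: "\<alpha> 0 < \<gamma>" "\<gamma> < n" "\<And>s. 1 \<le> s \<Longrightarrow> s < k \<Longrightarrow> \<gamma> \<le> \<alpha> s"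
    and \<delta>: "k+1 < \<delta>" "\<delta> < \<beta> (k-1)" "\<And>t. t + 1 < k \<Longrightarrow> \<beta> t \<le> \<delta>"
    and gap: "\<alpha> 0 + k \<le> \<beta> (k-1)"
    and r: "3 \<le> r" "3*r - 5 \<le> n"
  shows "card (transversals 0) + card (transversals 2) < 2 * card (transversals 1)"
proof -
  have "r \<le> n - \<alpha> 0 + 1 \<or> r \<le> \<beta> (k-1) - k"
    using alpha_range[of 0] block_nonempty gap r by linarith
  then have "card (lost_left 0) < card (lost_left 1)
      \<or> card (gained_right 1) < card (gained_right 0)"
  proof
    assume "r \<le> n - \<alpha> 0 + 1"
    then show ?thesis using card_lost_left_less_if_room[OF _ \<gamma> r(1)] fixed by blast
  next
    assume "r \<le> \<beta> (k-1) - k"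
    then show ?thesis using card_gained_right_less_if_room[OF _ \<delta> r(1)] fixed by blast
  qed
  then show ?thesis
    using transversals_second_difference card_lost_left_mono card_gained_right_antimono by linarith
qed


end

section \<open>Tuples, indices and the cyclic order\<close>

lemma idx_eq_iff: "idx l p = idx l q \<longleftrightarrow> int (2*l+1) dvd (p - q)"
proof -
  have M: "int (2*l+1) > 0" by simp
  have "idx l p = idx l q \<longleftrightarrow> nat ((p-1) mod int (2*l+1)) = nat ((q-1) mod int (2*l+1))"
    unfolding idx_def by simp
  also have "\<dots> \<longleftrightarrow> (p-1) mod int (2*l+1) = (q-1) mod int (2*l+1)"
    using M by (simp add: eq_nat_nat_iff)
  also have "\<dots> \<longleftrightarrow> int (2*l+1) dvd ((p-1) - (q-1))" by (rule mod_eq_dvd_iff)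
  finally show ?thesis by simp
qed

lemma wt_cong: "int (2*l+1) dvd (p - q) \<Longrightarrow> wt l C p = wt l C q"
  unfolding wt_def using idx_eq_iff by metis

lemma idx_bounds: "1 \<le> idx l p \<and> idx l p \<le> 2*l+1"
proof -
  have "(p-1) mod int (2*l+1) < int (2*l+1)" by simp
  then show ?thesis unfolding idx_def by linarith
qed

lemma idx_of_nat:
  assumes "1 \<le> q" "q \<le> 2*l+1"
  shows "idx l (int q) = q"
proof -
  have "(int q - 1) mod int (2*l+1) = int q - 1" using assms by (intro mod_pos_pos_trivial) auto
  then show ?thesis unfolding idx_def using assms by simp
qed

lemma dvd_abs_less_imp_zero:
  assumes "int N dvd x" "\<bar>x\<bar> < int N"
  shows "x = 0"
proof (rule ccontr)
  assume "x \<noteq> 0"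
  then have "\<bar>int N\<bar> \<le> \<bar>x\<bar>" using dvd_imp_le_int assms(1) by blast
  then show False using assms(2) by simp
qed

lemma odd_dvd_double_imp_dvd:
  assumes "int (2*l+1) dvd 2*x"
  shows "int (2*l+1) dvd x"
proof -
  have "int (2*l+1) dvd (int l+1) * (2*x)" using assms by simp
  moreover have "(int l+1) * (2*x) = x + int (2*l+1) * x" by (simp add: algebra_simps)
  ultimately have "int (2*l+1) dvd x + int (2*l+1) * x" by simp
  then show ?thesis by (simp add: dvd_add_left_iff)
qed

lemma double_cong_imp_eq:
  assumes "int (2*l+1) dvd 2*(int a - int b)" "a < 2*l+1" "b < 2*l+1"
  shows "a = b"
proof -
  have "int (2*l+1) dvd (int a - int b)" using odd_dvd_double_imp_dvd assms(1) by blast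
  then have "int a - int b = 0" using assms(2,3) by (intro dvd_abs_less_imp_zero[of "2*l+1"]) auto
  then show ?thesis by simp
qed

definition semi_valid_list :: "nat \<Rightarrow> (nat \<Rightarrow> nat) \<Rightarrow> nat list" where
  "semi_valid_list l C = map (\<lambda>t. C (2*t+1)) [0..<l+1] @ map (\<lambda>t. C (2*t+2)) [0..<l]"

lemma set_semi_valid_list: "set (semi_valid_list l C) = C ` {1..2*l+1}"
proof -
  have AB: "(\<lambda>t. 2*t+1) ` {0..<l+1} \<union> (\<lambda>t. 2*t+2) ` {0..<l} = {1..2*l+1}"
  proof
    show "(\<lambda>t. 2*t+1) ` {0..<l+1} \<union> (\<lambda>t. 2*t+2) ` {0..<l} \<subseteq> {1..2*l+1}" by auto
    show "{1..2*l+1} \<subseteq> (\<lambda>t. 2*t+1) ` {0..<l+1} \<union> (\<lambda>t. 2*t+2) ` {0..<l}"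
    proof
      fix x assume x: "x \<in> {1..2*l+1}"
      show "x \<in> (\<lambda>t. 2*t+1) ` {0..<l+1} \<union> (\<lambda>t. 2*t+2) ` {0..<l}"
      proof (cases "even x")
        case True
        then obtain y where y: "x = 2*y" by (rule evenE)
        then have "y \<ge> 1" "y - 1 < l" using x by auto
        then have "x = 2*(y-1)+2" "y - 1 \<in> {0..<l}" using y by auto
        then show ?thesis by blast
      next
        case False
        then obtain y where y: "x = 2*y+1" by (rule oddE)
        then have "y \<in> {0..<l+1}" using x by auto
        then show ?thesis using y by blast
      qed
    qed
  qed
  have "set (semi_valid_list l C) = (\<lambda>t. C (2*t+1)) ` {0..<l+1} \<union> (\<lambda>t. C (2*t+2)) ` {0..<l}"
    unfolding semi_valid_list_def by (simp del: upt_Suc)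
  also have "\<dots> = C ` ((\<lambda>t. 2*t+1) ` {0..<l+1} \<union> (\<lambda>t. 2*t+2) ` {0..<l})"
    by (simp only: image_Un image_image)
  finally have "set (semi_valid_list l C) = C ` ((\<lambda>t. 2*t+1) ` {0..<l+1} \<union> (\<lambda>t. 2*t+2) ` {0..<l})" .
  then show ?thesis using AB by simp
qed

lemma length_semi_valid_list: "length (semi_valid_list l C) = 2*l+1"
  unfolding semi_valid_list_def by simp

lemma semi_valid_inj:
  assumes "semi_valid n l C"
  shows "inj_on C {1..2*l+1}" "C ` {1..2*l+1} \<subseteq> {..<n}"
proof -
  have sv: "cyc_ordered n (semi_valid_list l C)"
    using assms unfolding semi_valid_def semi_valid_list_def by simp
  then have d: "distinct (semi_valid_list l C)" and s: "set (semi_valid_list l C) \<subseteq> {..<n}"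
    unfolding cyc_ordered_def by auto
  show "C ` {1..2*l+1} \<subseteq> {..<n}" using s set_semi_valid_list by metis
  have "card (C ` {1..2*l+1}) = 2*l+1"
    using distinct_card[OF d] set_semi_valid_list length_semi_valid_list by metis
  then show "inj_on C {1..2*l+1}" by (intro eq_card_imp_inj_on) auto
qed

lemma nth_semi_valid_list:
  assumes "t < 2*l+1"
  shows "semi_valid_list l C ! t = wt l C (int (1 + 2*t))"
proof (cases "t \<le> l")
  case True
  then have "semi_valid_list l C ! t = C (2*t+1)"
    unfolding semi_valid_list_def by (simp add: nth_append del: upt_Suc)
  moreover have "idx l (int (1+2*t)) = 2*t+1" using idx_of_nat[of "1+2*t" l] True by simp
  ultimately show ?thesis unfolding wt_def by simp
next
  case False
  have "t - (l+1) < l" using assms False by auto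
  then have "semi_valid_list l C ! t = C (2*(t-(l+1))+2)"
    unfolding semi_valid_list_def using assms False by (simp add: nth_append del: upt_Suc)
  moreover have "2*(t-(l+1))+2 = 2*t - 2*l" using False by simp
  moreover have "idx l (int (1+2*t)) = idx l (int (2*t - 2*l))"
    using False by (subst idx_eq_iff) (simp add: of_nat_diff)
  moreover have "idx l (int (2*t - 2*l)) = 2*t - 2*l" using False assms by (intro idx_of_nat) auto
  ultimately show ?thesis unfolding wt_def by simp
qed

lemma semi_valid_cwd_strict_mono:
  assumes "semi_valid n l C" "t < s" "s < 2*l+1"
  shows "cwd n (C 1) (wt l C (int (1+2*t))) < cwd n (C 1) (wt l C (int (1+2*s)))"
proof -
  have sv: "cyc_ordered n (semi_valid_list l C)"
    using assms unfolding semi_valid_def semi_valid_list_def by simp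
  have "semi_valid_list l C ! 0 = C 1"
    unfolding semi_valid_list_def by (simp add: nth_append del: upt_Suc)
  moreover have "cwd n (semi_valid_list l C ! 0) (semi_valid_list l C ! t)
      < cwd n (semi_valid_list l C ! 0) (semi_valid_list l C ! s)"
    using sv assms(2,3) length_semi_valid_list[of l C] unfolding cyc_ordered_def by auto
  ultimately show ?thesis
    using nth_semi_valid_list[of t l C] nth_semi_valid_list[of s l C] assms(2,3) by simp
qed

lemma mod_diff_eq_if:
  fixes x y m :: int
  assumes "0 \<le> x" "x < m" "0 \<le> y" "y < m"
  shows "(x - y) mod m = (if y \<le> x then x - y else x - y + m)"
proof (cases "y \<le> x")
  case False
  then have "(x - y) mod m = (x - y + m) mod m" by simp
  also have "\<dots> = x - y + m" using assms False by (intro mod_pos_pos_trivial) auto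
  finally show ?thesis using False by simp
qed (use assms in \<open>auto intro: mod_pos_pos_trivial\<close>)

lemma mod_diff_rotate_strict_mono:
  fixes a :: "nat \<Rightarrow> int" and m :: int
  assumes rng: "\<And>v. v < N \<Longrightarrow> 0 \<le> a v \<and> a v < m"
    and mono: "\<And>v w. v < w \<Longrightarrow> w < N \<Longrightarrow> a v < a w"
    and u: "u < N" and t: "t1 < t2" "t2 < N"
  shows "(a ((u+t1) mod N) - a u) mod m < (a ((u+t2) mod N) - a u) mod m"
proof -
  have mono_le: "a v \<le> a w" if "v \<le> w" "w < N" for v w
    using mono[of v w] that by (cases "v = w") auto
  have rot: "(a ((u+t) mod N) - a u) mod m
      = (if u + t < N then a (u+t) - a u else a (u+t-N) - a u + m)" if "t < N" for t
  proof (cases "u + t < N")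
    case True
    then show ?thesis
      using mod_diff_eq_if[of "a (u+t)" m "a u"] rng[of "u+t"] rng[OF u] mono_le[of u "u+t"]
      by simp
  next
    case False
    then have "(u+t) mod N = u+t-N" "u+t-N < u" using that u by (auto simp: mod_if)
    then show ?thesis
      using mod_diff_eq_if[of "a (u+t-N)" m "a u"] rng[of "u+t-N"] rng[OF u] mono[of "u+t-N" u] u False
      by simp
  qed
  have t1: "t1 < N" using t by simp
  consider "u + t2 < N" | "u + t1 < N" "N \<le> u + t2" | "N \<le> u + t1"
    using t by linarith
  then show ?thesis
  proof cases
    case 1
    then show ?thesis unfolding rot[OF t1] rot[OF t(2)] using mono[of "u+t1" "u+t2"] t by simp
  next
    case 2
    moreover have "u + t2 - N < N" using u t by linarith
    ultimately show ?thesis unfolding rot[OF t1] rot[OF t(2)] using rng[of "u+t1"] rng[of "u+t2-N"]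
      by simp
  next
    case 3
    moreover have "u + t1 - N < u + t2 - N" "u + t2 - N < N" "\<not> u + t2 < N" using u t 3 by linarith+
    ultimately show ?thesis unfolding rot[OF t1] rot[OF t(2)] using mono[of "u+t1-N" "u+t2-N"]
      by simp
  qed
qed

lemma cwd_rebase:
  assumes "0 < n"
  shows "int (cwd n b x) = (int (cwd n a x) - int (cwd n a b)) mod int n"
proof -
  have "int (cwd n a x) = (int x - int a) mod int n" "int (cwd n a b) = (int b - int a) mod int n"
    "int (cwd n b x) = (int x - int b) mod int n"
    unfolding cwd_def using assms by auto
  moreover have "((int x - int a) mod int n - (int b - int a) mod int n) mod int n
      = (int x - int b) mod int n"
    by (simp add: mod_diff_eq)
  ultimately show ?thesis by simp
qed

lemma cwd_lt: "0 < n \<Longrightarrow> cwd n z x < n"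
  unfolding cwd_def by (simp add: nat_less_iff)

lemma cwd_inj:
  assumes "0 < n"
  shows "inj_on (cwd n z) {..<n}"
proof (rule inj_onI)
  fix x y assume xy: "x \<in> {..<n}" "y \<in> {..<n}" "cwd n z x = cwd n z y"
  have "(int x - int z) mod int n = (int y - int z) mod int n"
    using xy(3) unfolding cwd_def using assms by (simp add: eq_nat_nat_iff)
  then have "int n dvd ((int x - int z) - (int y - int z))" by (simp add: mod_eq_dvd_iff)
  then have "int n dvd (int x - int y)" by simp
  moreover have "\<bar>int x - int y\<bar> < int n" using xy by auto
  ultimately have "int x - int y = 0" by (rule dvd_abs_less_imp_zero)
  then show "x = y" by simp
qed

lemma cwd_bij:
  assumes "0 < n"
  shows "bij_betw (cwd n z) {..<n} {..<n}"
proof -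
  have "cwd n z ` {..<n} \<subseteq> {..<n}" using cwd_lt[OF assms] by auto
  then have "cwd n z ` {..<n} = {..<n}" using cwd_inj[OF assms] by (intro endo_inj_surj) auto
  then show ?thesis using cwd_inj[OF assms] unfolding bij_betw_def by simp
qed

lemma mod_diff_le_iff_arc:
  fixes a b y m :: int
  assumes "0 \<le> a" "a < m" "0 \<le> b" "b < m" "0 \<le> y" "y < m"
  shows "(y - a) mod m \<le> (b - a) mod m \<longleftrightarrow> (if a \<le> b then a \<le> y \<and> y \<le> b else a \<le> y \<or> y \<le> b)"
proof -
  show ?thesis
    unfolding mod_diff_eq_if[OF assms(5,6,1,2)] mod_diff_eq_if[OF assms(3,4,1,2)]
    using assms by auto
qed

lemma cwd_image_cint:
  assumes n: "0 < n" and u: "u < n" and w: "w < n"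
  shows "cwd n z ` cint n u w = (if cwd n z u \<le> cwd n z w then {cwd n z u..cwd n z w}
            else {cwd n z u..<n} \<union> {..cwd n z w})"
proof -
  let ?P = "cwd n z"
  let ?cond = "\<lambda>y. (if ?P u \<le> ?P w then ?P u \<le> y \<and> y \<le> ?P w else ?P u \<le> y \<or> y \<le> ?P w)"
  have key: "x \<in> cint n u w \<longleftrightarrow> x < n \<and> ?cond (?P x)" if x: "x < n" for x
  proof -
    have "x \<in> cint n u w \<longleftrightarrow> int (cwd n u x) \<le> int (cwd n u w)" unfolding cint_def using x by simp
    also have "\<dots> \<longleftrightarrow> (int (?P x) - int (?P u)) mod int n \<le> (int (?P w) - int (?P u)) mod int n"
      using cwd_rebase[OF n, of u x z] cwd_rebase[OF n, of u w z] by simp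
    also have "\<dots> \<longleftrightarrow> ?cond (?P x)"
      using mod_diff_le_iff_arc[of "int (?P u)" "int n" "int (?P w)" "int (?P x)"] cwd_lt[OF n]
        by auto
    finally show ?thesis using x by simp
  qed
  have surj: "?P ` {..<n} = {..<n}" using cwd_bij[OF n] by (simp add: bij_betw_def)
  have "?P ` cint n u w = {y. y < n \<and> ?cond y}"
  proof
    show "?P ` cint n u w \<subseteq> {y. y < n \<and> ?cond y}"
    proof
      fix y assume "y \<in> ?P ` cint n u w"
      then obtain x where x: "x \<in> cint n u w" "y = ?P x" by auto
      have "x < n" using x(1) unfolding cint_def by simp
      then show "y \<in> {y. y < n \<and> ?cond y}" using key x cwd_lt[OF n] by auto
    qed
    show "{y. y < n \<and> ?cond y} \<subseteq> ?P ` cint n u w"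
    proof
      fix y assume y: "y \<in> {y. y < n \<and> ?cond y}"
      then have "y \<in> ?P ` {..<n}" using surj by simp
      then obtain x where x: "x < n" "y = ?P x" by auto
      then have "x \<in> cint n u w" using key y by auto
      then show "y \<in> ?P ` cint n u w" using x by auto
    qed
  qed
  also have "\<dots> = (if ?P u \<le> ?P w then {?P u..?P w} else {?P u..<n} \<union> {..?P w})"
    using cwd_lt[OF n, of z w] by auto
  finally show ?thesis .
qed

lemma card_hitting_sets_bij_image:
  assumes f: "bij_betw f {..<n} {..<(n::nat)}" and A: "\<And>t. t \<in> T \<Longrightarrow> A t \<subseteq> {..<n}"
  shows "card {e. e \<subseteq> {..<n} \<and> card e = r \<and> (\<forall>t\<in>T. e \<inter> A t \<noteq> {})}
       = card {E. E \<subseteq> {..<n} \<and> card E = r \<and> (\<forall>t\<in>T. E \<inter> f ` A t \<noteq> {})}"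
proof -
  have inj: "inj_on f {..<n}" using f by (rule bij_betw_imp_inj_on)
  have "(card (f ` e) = r \<and> (\<forall>t\<in>T. f ` e \<inter> f ` A t \<noteq> {}))
      \<longleftrightarrow> (card e = r \<and> (\<forall>t\<in>T. e \<inter> A t \<noteq> {}))" if "e \<in> Pow {..<n}" for e
  proof -
    have "card (f ` e) = card e" using that inj by (meson PowD card_image inj_on_subset)
    moreover have "f ` e \<inter> f ` A t = f ` (e \<inter> A t)" if "t \<in> T" for t
      using inj_on_image_Int[OF inj] that A \<open>e \<in> Pow {..<n}\<close> by auto
    ultimately show ?thesis by auto
  qed
  then have "bij_betw (image f)
      {e \<in> Pow {..<n}. card e = r \<and> (\<forall>t\<in>T. e \<inter> A t \<noteq> {})}
      {E \<in> Pow {..<n}. card E = r \<and> (\<forall>t\<in>T. E \<inter> f ` A t \<noteq> {})}"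
    by (intro bij_betw_Collect[OF bij_betw_image_Pow[OF f]])
  from bij_betw_same_card[OF this] show ?thesis by simp
qed

lemma exists_idx_step2: "\<exists>v<2*l+1. int (2*l+1) dvd (a + 2*int v - p)"
proof -
  let ?N = "2*l+1"
  have inj: "inj_on (\<lambda>v. idx l (a + 2*int v)) {..<?N}"
  proof (rule inj_onI)
    fix v w assume vw: "v \<in> {..<?N}" "w \<in> {..<?N}" "idx l (a + 2*int v) = idx l (a + 2*int w)"
    then have "int ?N dvd 2*(int v - int w)" unfolding idx_eq_iff by (simp add: algebra_simps)
    then show "v = w" using double_cong_imp_eq vw by auto
  qed
  have sub: "(\<lambda>v. idx l (a + 2*int v)) ` {..<?N} \<subseteq> {1..?N}" using idx_bounds by auto
  have "card ((\<lambda>v. idx l (a + 2*int v)) ` {..<?N}) = ?N" using card_image[OF inj] by simp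
  then have eq: "(\<lambda>v. idx l (a + 2*int v)) ` {..<?N} = {1..?N}"
    using sub by (intro card_subset_eq) auto
  have "idx l p \<in> {1..?N}" using idx_bounds by auto
  then have "idx l p \<in> (\<lambda>v. idx l (a + 2*int v)) ` {..<?N}" using eq by simp
  then obtain v where v: "v \<in> {..<?N}" "idx l p = idx l (a + 2*int v)" by (rule imageE)
  then have "int ?N dvd (a + 2*int v - p)" using idx_eq_iff by metis
  then show ?thesis using v(1) by auto
qed

lemma all_idx_iff_all_steps2:
  assumes periodic: "\<And>p q. int (2*l+1) dvd (p - q) \<Longrightarrow> \<phi> p \<longleftrightarrow> \<phi> q"
  shows "(\<forall>p\<in>{1..int (2*l+1)}. \<phi> p) \<longleftrightarrow> (\<forall>t<2*l+1. \<phi> (i + 2 * int t))"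
proof safe
  fix t assume all: "\<forall>p\<in>{1..int (2*l+1)}. \<phi> p"
  let ?p = "idx l (i + 2 * int t)"
  have bounds: "1 \<le> ?p" "?p \<le> 2*l+1" using idx_bounds by auto
  then have "idx l (int ?p) = ?p" by (rule idx_of_nat)
  then have "int (2*l+1) dvd (int ?p - (i + 2 * int t))" by (simp only: idx_eq_iff)
  moreover have "\<phi> (int ?p)" using all bounds by auto
  ultimately show "\<phi> (i + 2 * int t)" using periodic by blast
next
  fix p assume "\<forall>t<2*l+1. \<phi> (i + 2 * int t)"
  moreover obtain t where "t < 2*l+1" "int (2*l+1) dvd (i + 2 * int t - p)"
    using exists_idx_step2 by blast
  ultimately show "\<phi> p" using periodic by blast
qed

lemma wt_step2_mod:
  assumes "int (2*l+1) dvd (a - b)"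
  shows "wt l C (a + 2 * int t) = wt l C (b + 2 * int (t mod (2*l+1)))"
proof (rule wt_cong)
  have "int (t div (2*l+1)) * int (2*l+1) + int (t mod (2*l+1)) = int t"
    by (metis div_mult_mod_eq of_nat_add of_nat_mult)
  then have "a + 2 * int t - (b + 2 * int (t mod (2*l+1)))
      = (a - b) + int (2*l+1) * (2 * int (t div (2*l+1)))"
    by (simp add: algebra_simps)
  then show "int (2*l+1) dvd (a + 2 * int t - (b + 2 * int (t mod (2*l+1))))"
    using assms by (simp only: dvd_add dvd_triv_left)
qed

lemma wt_pred_step2: "wt l C (i + 2 * int t - 1) = wt l C (i + 2 * int ((t+l) mod (2*l+1)))"
proof -
  have "i + 2 * int t - 1 = (i - int (2*l+1)) + 2 * int (t + l)" by simp
  also have "wt l C \<dots> = wt l C (i + 2 * int ((t+l) mod (2*l+1)))"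
    by (rule wt_step2_mod)
      (simp only: diff_right_commute[of i] diff_self diff_0 dvd_minus_iff dvd_refl)
  finally show ?thesis .
qed

lemma H_by_steps:
  "H n r l C = {e. e \<subseteq> {..<n} \<and> card e = r \<and>
     (\<forall>t\<in>{..<2*l+1}.
        e \<inter> cint n (wt l C (i + 2*int t)) (wt l C (i + 2*int ((t+l) mod (2*l+1)))) \<noteq> {})}"
proof -
  have "(\<forall>p\<in>{1..int (2*l+1)}. e \<inter> cint n (wt l C p) (wt l C (p - 1)) \<noteq> {})
      \<longleftrightarrow> (\<forall>t<2*l+1. e \<inter> cint n (wt l C (i + 2*int t)) (wt l C (i + 2*int t - 1)) \<noteq> {})" for e
  proof (rule all_idx_iff_all_steps2)
    fix p q :: int assume d: "int (2*l+1) dvd (p - q)"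
    then have "int (2*l+1) dvd (p - 1 - (q - 1))" by simp
    then show "e \<inter> cint n (wt l C p) (wt l C (p - 1)) \<noteq> {}
        \<longleftrightarrow> e \<inter> cint n (wt l C q) (wt l C (q - 1)) \<noteq> {}"
      using wt_cong[OF d] wt_cong by metis
  qed
  then show ?thesis unfolding H_def wt_pred_step2 by auto
qed

lemma vtx_lt: "0 < n \<Longrightarrow> vtx n a < n"
  unfolding vtx_def by (simp add: nat_less_iff)

lemma int_vtx: "0 < n \<Longrightarrow> int (vtx n a) = a mod int n"
  unfolding vtx_def by simp

section \<open>Reduction to the linear model\<close>

lemma idx_step2_inj:
  assumes "t < 2*l+1" "s < 2*l+1" "idx l (i + 2*int t) = idx l (i + 2*int s)"
  shows "t = s"
proof -
  have "int (2*l+1) dvd 2*(int t - int s)"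
    using assms(3) unfolding idx_eq_iff by (simp add: algebra_simps)
  then show ?thesis using double_cong_imp_eq assms(1,2) by blast
qed

locale consecutive_block =
  fixes n r l k :: nat and C :: "nat \<Rightarrow> nat" and i j :: int
  assumes l_pos: "1 \<le> l" and k_pos: "1 \<le> k" and k_le_l: "k \<le> l"
    and semi_valid_C: "semi_valid n l C"
    and consec: "consec_with n l C i k j"
    and semi_valid_minus: "semi_valid n l (shiftC n l C i k j (-1))"
    and semi_valid_plus: "semi_valid n l (shiftC n l C i k j 1)"
begin

text \<open>\<open>pos t\<close> is \<open>w\<^bsub>i+2t\<^esub>\<close>; as \<open>t\<close> runs through \<open>0, \<dots>, 2l\<close> this visits every entry of
  \<open>C\<close>, and the interval \<open>[w\<^bsub>i+2t\<^esub>, w\<^bsub>i+2t-1\<^esub>]\<close> is \<open>[pos t, pos (t+l)]\<close> (indices mod \<open>2l+1\<close>).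
  \<open>profile m\<close> is the same walk through \<open>C\<^bsub>i,k,m\<^esub>\<close>, and \<open>rel\<close> renames the
  vertices by their clockwise distance from \<open>v\<^bsub>j-1\<^esub>\<close>.\<close>

definition pos :: "nat \<Rightarrow> nat" where
  "pos t = wt l C (i + 2*int t)"

definition profile :: "int \<Rightarrow> nat \<Rightarrow> nat" where
  "profile m t = (if t < k then vtx n (j + int t + m) else pos t)"

definition origin :: nat where
  "origin = vtx n (j-1)"

definition rel :: "nat \<Rightarrow> nat" where
  "rel x = cwd n origin x"

lemma wt_shiftC_step2:
  assumes t: "t < 2*l+1"
  shows "wt l (shiftC n l C i k j m) (i + 2*int t) = profile m t"
proof (cases "t < k")
  case True
  let ?q = "idx l (i + 2*int t)"
  have "(SOME s. s < k \<and> idx l (i + 2*int s) = ?q) = t"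
  proof (rule some_equality)
    show "s = t" if "s < k \<and> idx l (i + 2*int s) = ?q" for s
      using idx_step2_inj[where t = s and s = t and l = l and i = i] that t k_le_l by simp
  qed (use True in simp)
  then show ?thesis
    unfolding wt_def shiftC_def profile_def using True by auto
next
  case False
  have "\<not> (\<exists>s<k. idx l (i + 2*int s) = idx l (i + 2*int t))"
  proof
    assume "\<exists>s<k. idx l (i + 2*int s) = idx l (i + 2*int t)"
    then obtain s where "s < k" "idx l (i + 2*int s) = idx l (i + 2*int t)" by blast
    then show False
      using idx_step2_inj[where t = s and s = t and l = l and i = i] t k_le_l False by simp
  qed
  then show ?thesis unfolding wt_def shiftC_def profile_def pos_def using False by auto
qed

lemma pos_block: "t < k \<Longrightarrow> pos t = vtx n (j + int t)"
  using consec unfolding consec_with_def pos_def by simp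

lemma tuple_length_le_n: "2*l+1 \<le> n"
proof -
  have "card {1..2*l+1} \<le> card {..<n}"
    using semi_valid_inj[OF semi_valid_C] by (intro card_inj_on_le) auto
  then show ?thesis by simp
qed

lemma n_pos: "0 < n" using tuple_length_le_n by simp
lemma Suc_k_lt_n: "k + 1 < n" using tuple_length_le_n k_pos k_le_l by simp

lemma pos_lt: "pos t < n"
proof -
  have "idx l (i + 2*int t) \<in> {1..2*l+1}" using idx_bounds by auto
  then have "C (idx l (i + 2*int t)) \<in> C ` {1..2*l+1}" by (rule imageI)
  then show ?thesis using semi_valid_inj(2)[OF semi_valid_C] unfolding pos_def wt_def by blast
qed

lemma vtx_eq_imp_dvd:
  assumes "vtx n a = vtx n b"
  shows "int n dvd (a - b)"
proof -
  have "a mod int n = b mod int n" using assms int_vtx[OF n_pos] by metis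
  then show ?thesis by (simp add: mod_eq_dvd_iff)
qed

lemma profile_inj:
  assumes "semi_valid n l (shiftC n l C i k j m)" "s < 2*l+1" "t < 2*l+1"
    and "profile m s = profile m t"
  shows "s = t"
proof -
  have "shiftC n l C i k j m (idx l (i + 2*int s)) = shiftC n l C i k j m (idx l (i + 2*int t))"
    using assms(4) wt_shiftC_step2[OF assms(2)] wt_shiftC_step2[OF assms(3)]
    unfolding wt_def by simp
  then have "idx l (i + 2*int s) = idx l (i + 2*int t)"
    using inj_onD[OF semi_valid_inj(1)[OF assms(1)]] idx_bounds by (metis atLeastAtMost_iff)
  then show ?thesis using idx_step2_inj assms(2,3) by blast
qed

lemma pos_ne_origin:
  assumes t: "t < 2*l+1"
  shows "pos t \<noteq> origin"
proof (cases "t < k")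
  case True
  show ?thesis
  proof
    assume "pos t = origin"
    then have "vtx n (j + int t) = vtx n (j - 1)"
      using pos_block[OF True] unfolding origin_def by simp
    then have "int n dvd (int t + 1)" using vtx_eq_imp_dvd by fastforce
    then have "int n \<le> int t + 1" by (intro zdvd_imp_le) auto
    then show False using True Suc_k_lt_n by simp
  qed
next
  case False
  have "profile (-1) 0 = origin" unfolding profile_def origin_def using k_pos by simp
  moreover have "profile (-1) t = pos t" unfolding profile_def using False by simp
  ultimately have "pos t = origin \<Longrightarrow> 0 = t"
    using profile_inj[OF semi_valid_minus _ t, of 0] by simp
  then show ?thesis using False k_pos by auto
qed

lemma pos_ne_block_end:
  assumes t: "t < 2*l+1" "k \<le> t"
  shows "pos t \<noteq> vtx n (j + int k)"
proof -
  have "profile 1 (k-1) = vtx n (j + int k)"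
    unfolding profile_def using k_pos by (simp add: of_nat_diff)
  moreover have "profile 1 t = pos t" unfolding profile_def using t by simp
  moreover have "k - 1 < 2*l+1" using k_le_l by simp
  ultimately have "pos t = vtx n (j + int k) \<Longrightarrow> k - 1 = t"
    using profile_inj[OF semi_valid_plus _ t(1), of "k-1"] by simp
  then show ?thesis using t(2) k_pos by auto
qed

lemma rel_vtx: "rel (vtx n (j + a)) = nat ((a + 1) mod int n)"
proof -
  have "int (vtx n (j + a)) - int origin = (j + a) mod int n - (j - 1) mod int n"
    unfolding origin_def using int_vtx[OF n_pos] by simp
  then have "(int (vtx n (j + a)) - int origin) mod int n = ((j + a) - (j - 1)) mod int n"
    by (simp add: mod_diff_eq)
  then show ?thesis unfolding rel_def cwd_def by simp
qed

lemma rel_vtx_small: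
  assumes "0 \<le> a + 1" "a + 1 < int n"
  shows "rel (vtx n (j + a)) = nat (a + 1)"
  using rel_vtx[of a] assms by (simp add: mod_pos_pos_trivial)

lemma rel_lt: "rel x < n" unfolding rel_def using cwd_lt[OF n_pos] .

lemma rel_inj: "x < n \<Longrightarrow> y < n \<Longrightarrow> rel x = rel y \<Longrightarrow> x = y"
  using cwd_inj[OF n_pos, of origin] unfolding rel_def by (auto dest: inj_onD)

lemma rel_bij: "bij_betw rel {..<n} {..<n}"
  using cwd_bij[OF n_pos, of origin] by (simp add: rel_def[abs_def])

lemma rel_pos_block: "t < k \<Longrightarrow> rel (pos t) = t + 1"
  using pos_block rel_vtx_small[of "int t"] Suc_k_lt_n by simp

lemma pos_0: "pos 0 = vtx n j" using pos_block[of 0] k_pos by simp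

lemma rel_eq_cwd_pos_0:
  assumes "x < n" "x \<noteq> origin"
  shows "rel x = cwd n (pos 0) x + 1"
proof -
  have zc: "int (cwd n (pos 0) origin) = int n - 1"
  proof -
    have "int (cwd n (pos 0) origin) = (int origin - int (pos 0)) mod int n"
      unfolding cwd_def using n_pos by simp
    also have "\<dots> = ((j - 1) mod int n - j mod int n) mod int n"
      unfolding origin_def pos_0 using int_vtx[OF n_pos] by simp
    also have "\<dots> = ((j - 1) - j) mod int n" by (simp add: mod_diff_eq)
    also have "\<dots> = int n - 1" using n_pos by (simp add: zmod_minus1)
    finally show ?thesis .
  qed
  have z_lt: "origin < n" unfolding origin_def using vtx_lt[OF n_pos] .
  have c0_lt: "pos 0 < n" using pos_lt .
  have ne: "cwd n (pos 0) x \<noteq> cwd n (pos 0) origin"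
    using cwd_inj[OF n_pos, of "pos 0"] assms z_lt by (auto dest: inj_onD)
  have lt: "cwd n (pos 0) x < n" using cwd_lt[OF n_pos] .
  then have lt2: "int (cwd n (pos 0) x) + 1 < int n" using ne zc by linarith
  have "int (rel x) = (int (cwd n (pos 0) x) - int (cwd n (pos 0) origin)) mod int n"
    unfolding rel_def using cwd_rebase[OF n_pos] .
  also have "\<dots> = (int (cwd n (pos 0) x) + 1) mod int n" unfolding zc
    by (metis (no_types, opaque_lifting) add.commute diff_diff_eq2 mod_add_self2 diff_add_cancel)
  also have "\<dots> = int (cwd n (pos 0) x) + 1" using lt2 by (intro mod_pos_pos_trivial) auto
  finally show ?thesis by simp
qed

lemma rel_pos_strict_mono:
  assumes "t1 < t2" "t2 < 2*l+1"
  shows "rel (pos t1) < rel (pos t2)"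
proof -
  let ?N = "2*l+1"
  obtain u where u: "u < ?N" "int ?N dvd (1 + 2*int u - i)"
    using exists_idx_step2[of l 1 i] by blast
  have cv: "pos t = wt l C (1 + 2 * int ((u+t) mod ?N))" for t
  proof -
    have "int ?N dvd ((i - 2 * int u) - 1)" using u(2) by (simp add: dvd_diff_commute algebra_simps)
    then have "wt l C ((i - 2 * int u) + 2 * int (u + t)) = wt l C (1 + 2 * int ((u+t) mod ?N))"
      by (rule wt_step2_mod)
    then show ?thesis unfolding pos_def by simp
  qed
  define a where "a v = int (cwd n (C 1) (wt l C (1 + 2 * int v)))" for v
  have rng: "0 \<le> a v \<and> a v < int n" if "v < ?N" for v unfolding a_def using cwd_lt[OF n_pos] by auto
  have mono: "a v < a w" if "v < w" "w < ?N" for v w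
    unfolding a_def using semi_valid_cwd_strict_mono[OF semi_valid_C that] by simp
  have cu: "pos 0 = wt l C (1 + 2 * int u)" using cv[of 0] u(1) by simp
  have cw: "int (cwd n (pos 0) (pos t)) = (a ((u+t) mod ?N) - a u) mod int n" for t
  proof -
    have "int (cwd n (pos 0) (pos t))
        = (int (cwd n (C 1) (pos t)) - int (cwd n (C 1) (pos 0))) mod int n"
      using cwd_rebase[OF n_pos] .
    then show ?thesis unfolding a_def cu using cv[of t] by simp
  qed
  have "cwd n (pos 0) (pos t1) < cwd n (pos 0) (pos t2)"
    using mod_diff_rotate_strict_mono[of ?N a "int n" u t1 t2] rng mono u(1) assms cw[of t1] cw[of t2]
    by simp
  then show ?thesis using rel_eq_cwd_pos_0[OF pos_lt pos_ne_origin] assms by simp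
qed

lemma rel_pos_mono: "t1 \<le> t2 \<Longrightarrow> t2 < 2*l+1 \<Longrightarrow> rel (pos t1) \<le> rel (pos t2)"
  using rel_pos_strict_mono[of t1 t2] by (cases "t1 = t2") auto

lemma rel_pos_gap: "t + d < 2*l+1 \<Longrightarrow> rel (pos t) + d \<le> rel (pos (t + d))"
proof (induction d)
  case (Suc d)
  then have "rel (pos t) + d \<le> rel (pos (t + d))" by simp
  moreover have "rel (pos (t + d)) < rel (pos (t + Suc d))"
    using rel_pos_strict_mono[of "t+d" "t + Suc d"] Suc.prems by simp
  ultimately show ?case by simp
qed simp

lemma rel_pos_above_block:
  assumes "k \<le> t" "t < 2*l+1"
  shows "k + 1 < rel (pos t)" "rel (pos t) < n"
proof -
  have "rel (pos (k-1)) < rel (pos t)" using rel_pos_strict_mono[of "k-1" t] assms k_pos by simp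
  then have g: "k < rel (pos t)" using rel_pos_block[of "k-1"] k_pos by simp
  have "rel (vtx n (j + int k)) = k + 1" using rel_vtx_small[of "int k"] Suc_k_lt_n by simp
  moreover have "pos t \<noteq> vtx n (j + int k)" using pos_ne_block_end assms by blast
  ultimately have "rel (pos t) \<noteq> k + 1" using rel_inj[OF pos_lt vtx_lt[OF n_pos]] by metis
  then show "k + 1 < rel (pos t)" using g by simp
  show "rel (pos t) < n" using rel_lt .
qed

definition left_end :: "nat \<Rightarrow> nat" where "left_end s = rel (pos (l + s))"
definition right_start :: "nat \<Rightarrow> nat" where "right_start s = rel (pos (l + s + 1))"
definition fixed_edge :: "nat \<Rightarrow> nat set" where
  "fixed_edge t = rel ` cint n (pos t) (pos ((t+l) mod (2*l+1)))"
definition is_fixed :: "nat \<Rightarrow> bool" where "is_fixed t \<longleftrightarrow> t < 2*l+1 \<and> k \<le> t \<and> \<not> (l+1 \<le> t \<and> t \<le> l+k)"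
definition fixed_edges :: "nat set set" where "fixed_edges = fixed_edge ` {t. is_fixed t}"

lemma rel_image_cint:
  assumes "x < n" "y < n"
  shows "rel ` cint n x y = (if rel x \<le> rel y then {rel x..rel y} else {rel x..<n} \<union> {..rel y})"
  unfolding rel_def using cwd_image_cint[OF n_pos assms] .

lemma is_fixed_partner:
  assumes "is_fixed t"
  shows "(t+l) mod (2*l+1) = (if t \<le> l then t + l else t - l - 1)" "k \<le> (t+l) mod (2*l+1)"
    "(t+l) mod (2*l+1) < 2*l+1"
proof -
  show e: "(t+l) mod (2*l+1) = (if t \<le> l then t + l else t - l - 1)"
    using assms unfolding is_fixed_def by (auto simp: mod_if)
  show "k \<le> (t+l) mod (2*l+1)" unfolding e using assms k_le_l unfolding is_fixed_def by auto
  show "(t+l) mod (2*l+1) < 2*l+1" by simp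
qed

lemma block_shift_instance: "block_shift n k fixed_edges left_end right_start"
proof
  show "1 \<le> k" by (rule k_pos)
  show "k + 1 < left_end s \<and> left_end s < n" if "s < k" for s
    unfolding left_end_def using rel_pos_above_block[of "l+s"] that k_le_l by auto
  show "k + 1 < right_start s \<and> right_start s < n" if "s < k" for s
    unfolding right_start_def using rel_pos_above_block[of "l+s+1"] that k_le_l by auto
  fix f assume "f \<in> fixed_edges"
  then obtain t where t: "is_fixed t" "f = fixed_edge t" unfolding fixed_edges_def by auto
  have a: "k + 1 < rel (pos t)" using rel_pos_above_block[of t] t(1) unfolding is_fixed_def by auto
  have b: "k + 1 < rel (pos ((t+l) mod (2*l+1)))"
    using rel_pos_above_block is_fixed_partner[OF t(1)] by blast
  show "{..k+1} \<subseteq> f \<or> {..k+1} \<inter> f = {}"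
    unfolding t(2) fixed_edge_def rel_image_cint[OF pos_lt pos_lt] using a b by auto
qed

lemma fixed_edge_cases:
  assumes "f \<in> fixed_edges"
  shows "{..k+1} \<subseteq> f \<or> (rel (pos (l+1)) \<in> f \<and> rel (pos (l+k-1)) \<in> f)"
proof -
  obtain t where t: "is_fixed t" "f = fixed_edge t" using assms unfolding fixed_edges_def by auto
  have tr: "t < 2*l+1" "k \<le> t" using t(1) unfolding is_fixed_def by auto
  show ?thesis
  proof (cases "t \<le> l")
    case True
    then have e: "(t+l) mod (2*l+1) = t + l" using is_fixed_partner(1)[OF t(1)] by simp
    have lt: "rel (pos t) < rel (pos (t+l))"
      using rel_pos_strict_mono[of t "t+l"] True l_pos by auto
    have f: "f = {rel (pos t)..rel (pos (t+l))}"
      unfolding t(2) fixed_edge_def e rel_image_cint[OF pos_lt pos_lt] using lt by simp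
    have "rel (pos t) \<le> rel (pos (l+1))" "rel (pos (l+1)) \<le> rel (pos (t+l))"
      using rel_pos_mono[of t "l+1"] rel_pos_mono[of "l+1" "t+l"] True tr k_pos by auto
    moreover have "rel (pos t) \<le> rel (pos (l+k-1))" "rel (pos (l+k-1)) \<le> rel (pos (t+l))"
      using rel_pos_mono[of t "l+k-1"] rel_pos_mono[of "l+k-1" "t+l"] True tr k_pos k_le_l by auto
    ultimately show ?thesis unfolding f by auto
  next
    case False
    then have e: "(t+l) mod (2*l+1) = t - l - 1" using is_fixed_partner(1)[OF t(1)] by simp
    have lt: "rel (pos (t-l-1)) < rel (pos t)"
      using rel_pos_strict_mono[of "t-l-1" t] False tr by auto
    have b: "k + 1 < rel (pos (t-l-1))"
      using rel_pos_above_block is_fixed_partner[OF t(1)] e by metis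
    have f: "f = {rel (pos t)..<n} \<union> {..rel (pos (t-l-1))}"
      unfolding t(2) fixed_edge_def e rel_image_cint[OF pos_lt pos_lt] using lt by simp
    show ?thesis unfolding f using b by auto
  qed
qed

end

sublocale consecutive_block \<subseteq> BS: block_shift n k r fixed_edges left_end right_start
  by (rule block_shift_instance)

context consecutive_block begin

definition moved_edge :: "int \<Rightarrow> nat \<Rightarrow> nat set" where
  "moved_edge m t = rel ` cint n (profile m t) (profile m ((t+l) mod (2*l+1)))"

lemma profile_lt: "profile m t < n"
  unfolding profile_def using vtx_lt[OF n_pos] pos_lt by simp

lemma rel_profile_block:
  assumes "-1 \<le> m" "m \<le> 1" "s < k"
  shows "rel (profile m s) = s + nat (m+1)"
proof -
  have "rel (vtx n (j + (int s + m))) = nat (int s + m + 1)"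
    using rel_vtx_small[of "int s + m"] assms Suc_k_lt_n by simp
  then show ?thesis using assms by (simp add: profile_def algebra_simps nat_add_distrib)
qed

lemma moved_edge_left:
  assumes "-1 \<le> m" "m \<le> 1" "s < k"
  shows "moved_edge m s = {s + nat (m+1)..left_end s}"
proof -
  have partner: "(s+l) mod (2*l+1) = l + s" using assms(3) k_le_l by simp
  have "profile m (l + s) = pos (l + s)" unfolding profile_def using k_le_l by simp
  moreover have "k+1 < rel (pos (l+s))" using rel_pos_above_block[of "l+s"] assms(3) k_le_l by auto
  ultimately show ?thesis
    unfolding moved_edge_def partner rel_image_cint[OF profile_lt profile_lt]
      rel_profile_block[OF assms]
    using assms by (simp add: left_end_def)
qed

lemma moved_edge_right:
  assumes "-1 \<le> m" "m \<le> 1" "s < k"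
  shows "moved_edge m (l+s+1) = {right_start s..<n} \<union> {..s + nat (m+1)}"
proof -
  have partner: "(l+s+1+l) mod (2*l+1) = s" using assms(3) k_le_l by (simp add: mod_if)
  have "profile m (l+s+1) = pos (l+s+1)" unfolding profile_def using k_le_l by simp
  moreover have "k+1 < rel (pos (l+s+1))"
    using rel_pos_above_block[of "l+s+1"] assms(3) k_le_l by auto
  ultimately show ?thesis
    unfolding moved_edge_def partner rel_image_cint[OF profile_lt profile_lt]
      rel_profile_block[OF assms]
    using assms by (simp add: right_start_def)
qed

lemma moved_edge_fixed: "is_fixed t \<Longrightarrow> moved_edge m t = fixed_edge t"
  using is_fixed_partner(2)[of t] unfolding moved_edge_def fixed_edge_def profile_def is_fixed_def
  by auto

lemma steps_decomp: "{..<2*l+1} = {..<k} \<union> (\<lambda>s. l+s+1) ` {..<k} \<union> {t. is_fixed t}"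
proof -
  have "t \<in> (\<lambda>s. l+s+1) ` {..<k}" if "l+1 \<le> t" "t \<le> l+k" for t
    using that by (intro image_eqI[of t _ "t-l-1"]) auto
  then show ?thesis using k_le_l by (auto simp: is_fixed_def)
qed

lemma card_H_profile:
  assumes m: "-1 \<le> m" "m \<le> 1"
    and prof: "\<And>t. t < 2*l+1 \<Longrightarrow> wt l C' (i + 2*int t) = profile m t"
  shows "card (H n r l C') = card (BS.transversals (nat (m+1)))"
proof -
  let ?hits = "\<lambda>E. \<forall>t\<in>{..<2*l+1}. E \<inter> moved_edge m t \<noteq> {}"
  have "H n r l C' = {e. e \<subseteq> {..<n} \<and> card e = r \<and>
      (\<forall>t\<in>{..<2*l+1}. e \<inter> cint n (profile m t) (profile m ((t+l) mod (2*l+1))) \<noteq> {})}"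
    unfolding H_by_steps[of n r l C' i] using prof by simp
  then have "card (H n r l C') = card {E. E \<subseteq> {..<n} \<and> card E = r \<and> ?hits E}"
    unfolding moved_edge_def
    by (simp only:) (rule card_hitting_sets_bij_image[OF rel_bij], auto simp: cint_def)
  also have "{E. E \<subseteq> {..<n} \<and> card E = r \<and> ?hits E} = BS.transversals (nat (m+1))"
  proof -
    have "?hits E \<longleftrightarrow> (\<forall>f\<in>fixed_edges. E \<inter> f \<noteq> {}) \<and> E \<in> BS.hits_left (nat (m+1))
        \<and> E \<in> BS.hits_right (nat (m+1))" for E
    proof -
      have "?hits E \<longleftrightarrow> (\<forall>s<k. E \<inter> moved_edge m s \<noteq> {}) \<and> (\<forall>s<k. E \<inter> moved_edge m (l+s+1) \<noteq> {})
          \<and> (\<forall>t. is_fixed t \<longrightarrow> E \<inter> moved_edge m t \<noteq> {})"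
        unfolding steps_decomp by blast
      then show ?thesis
        by (simp add: moved_edge_left[OF m] moved_edge_right[OF m, simplified] moved_edge_fixed
            BS.hits_left_def BS.hits_right_def fixed_edges_def conj_ac)
    qed
    then show ?thesis unfolding BS.transversals_def BS.adm_def by auto
  qed
  finally show ?thesis .
qed

lemma card_H_eq_transversals:
  "card (H n r l (shiftC n l C i k j (-1))) = card (BS.transversals 0)"
  "card (H n r l C) = card (BS.transversals 1)"
  "card (H n r l (shiftC n l C i k j 1)) = card (BS.transversals 2)"
proof -
  have "card (H n r l (shiftC n l C i k j (-1))) = card (BS.transversals (nat (-1+1)))"
    by (rule card_H_profile) (use wt_shiftC_step2 in auto)
  then show "card (H n r l (shiftC n l C i k j (-1))) = card (BS.transversals 0)" by simp
  have "card (H n r l C) = card (BS.transversals (nat (0+1)))"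
    by (rule card_H_profile) (use pos_block in \<open>auto simp: pos_def profile_def\<close>)
  then show "card (H n r l C) = card (BS.transversals 1)" by simp
  have "card (H n r l (shiftC n l C i k j 1)) = card (BS.transversals (nat (1+1)))"
    by (rule card_H_profile) (use wt_shiftC_step2 in auto)
  then show "card (H n r l (shiftC n l C i k j 1)) = card (BS.transversals 2)" by simp
qed

lemma min_card_H_shift_le:
  "min (card (H n r l (shiftC n l C i k j (-1)))) (card (H n r l (shiftC n l C i k j 1)))
     \<le> card (H n r l C)"
  using BS.card_transversals_concave unfolding card_H_eq_transversals by linarith

lemma min_card_H_shift_less:
  assumes "3 \<le> r" "3*r - 5 \<le> n"
  shows "min (card (H n r l (shiftC n l C i k j (-1)))) (card (H n r l (shiftC n l C i k j 1)))
     < card (H n r l C)"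
proof -
  let ?g = "rel (pos (l+1))" and ?d = "rel (pos (l+k-1))"
  have g1: "left_end 0 < ?g"
    unfolding left_end_def using rel_pos_strict_mono[of l "l+1"] l_pos by simp
  have g2: "?g < n" using rel_lt .
  have g3: "?g \<le> left_end s" if "1 \<le> s" "s < k" for s
    unfolding left_end_def using rel_pos_mono[of "l+1" "l+s"] that k_le_l by simp
  have d1: "k + 1 < ?d" using rel_pos_above_block[of "l+k-1"] l_pos k_le_l k_pos by simp
  have d2: "?d < right_start (k-1)"
    unfolding right_start_def using rel_pos_strict_mono[of "l+k-1" "l+(k-1)+1"] k_pos k_le_l by simp
  have d3: "right_start t \<le> ?d" if "t + 1 < k" for t
    unfolding right_start_def using rel_pos_mono[of "l+t+1" "l+k-1"] that k_le_l by simp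
  have ab: "left_end 0 + k \<le> right_start (k-1)"
    unfolding left_end_def right_start_def using rel_pos_gap[of l k] k_pos k_le_l by simp
  have "card (BS.transversals 0) + card (BS.transversals 2) < 2 * card (BS.transversals 1)"
    by (rule BS.card_transversals_strictly_concave[OF fixed_edge_cases g1 g2 g3 d1 d2 d3 ab assms])
  then show ?thesis unfolding card_H_eq_transversals by linarith
qed

end

theorem proposition3p7:
  fixes n r l k :: nat and C :: "nat \<Rightarrow> nat" and i j :: int
  assumes "r \<ge> 2" and "l \<ge> 1"
    and "semi_valid n l C"
    and "1 \<le> k" and "k \<le> l"
    and "consec_with n l C i k j"
    and "semi_valid n l (shiftC n l C i k j (-1))"
    and "semi_valid n l (shiftC n l C i k j 0)"
    and "semi_valid n l (shiftC n l C i k j 1)"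
  shows "card (H n r l C) \<ge> min (card (H n r l (shiftC n l C i k j (-1))))
                                 (card (H n r l (shiftC n l C i k j 1)))
    \<and> (r \<ge> 3 \<and> n \<ge> 3*r - 5 \<longrightarrow>
         card (H n r l C) > min (card (H n r l (shiftC n l C i k j (-1))))
                                (card (H n r l (shiftC n l C i k j 1))))"
proof -
  \<comment> \<open>\<open>C\<^bsub>i,k,0\<^esub> = C\<close>.\<close>
  interpret consecutive_block n r l k C i j
    by (unfold_locales) (use assms in auto)
  show ?thesis using min_card_H_shift_le min_card_H_shift_less by auto
qed

end
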